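(* Let $R$ be a $*$-ring, let $a\in R$, and let $n\geq 2$ be an integer. Then $a$ is core invertible if and only if there exists $b\in {}^{\circ}a$ such that $u=a^{n}+b^{*}b$ is invertible. In this case $$a^{\mathrm{core}}=a^{n-1}u^{-1}.$$
   Context: A $*$-ring is an associative ring with identity $1$ and an involution $*$, i.e. $(a^* )^*=a$, $(ab)^*=b^*a^*$ and $(a+b)^*=a^*+b^*$. For $a\in R$, ${}^{\circ}a=\{x\in R : xa=0\}$. An element $a$ is core invertible if there is $x\in R$ with $(ax)^*=ax$, $ax^2=x$ and $xa^2=a$. Such an $x$ is unique and denoted $a^{\mathrm{core}}$. "Invertible" means having a two-sided inverse in $R$. *)

theory Defs
  imports Main
begin

class star_ring = ring_1 +
  fixes star :: "'a \<Rightarrow> 'a"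
  assumes star_star: "star (star a) = a"
      and star_mult: "star (a * b) = star b * star a"
      and star_add: "star (a + b) = star a + star b"

definition left_annihilator :: "'a::ring_1 \<Rightarrow> 'a set" where
  "left_annihilator a = {x. x * a = 0}"

definition invertible_el :: "'a::ring_1 \<Rightarrow> bool" where
  "invertible_el u \<longleftrightarrow> (\<exists>v. u * v = 1 \<and> v * u = 1)"

definition inv_el :: "'a::ring_1 \<Rightarrow> 'a" where
  "inv_el u = (THE v. u * v = 1 \<and> v * u = 1)"

definition is_core_inverse :: "'a::star_ring \<Rightarrow> 'a \<Rightarrow> bool" where
  "is_core_inverse a x \<longleftrightarrow> star (a * x) = a * x \<and> a * x^2 = x \<and> x * a^2 = a"

definition core_invertible :: "'a::star_ring \<Rightarrow> bool" where
  "core_invertible a \<longleftrightarrow> (\<exists>x. is_core_inverse a x)"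

definition core_inv :: "'a::star_ring \<Rightarrow> 'a" where
  "core_inv a = (THE x. is_core_inverse a x)"

end

theory Submission
  imports Defs
begin

text \<open>
  If \<open>x\<close> is the core inverse of \<open>a\<close>, then \<open>p = a x\<close> is a projection with
  \<open>(1 - p) a = 0\<close>, and \<open>a\<^sup>n + (1 - p)\<close> has the explicit inverse \<open>x\<^sup>n + (1 - x a)\<close>.
  Conversely, let \<open>b a = 0\<close> and \<open>u = a\<^sup>n + b\<^sup>* b\<close> be invertible, and put \<open>x = a\<^sup>n\<^sup>-\<^sup>1 u\<^sup>-\<^sup>1\<close>.
  Since \<open>a\<^sup>* b\<^sup>* = 0\<close> we get \<open>a\<^sup>* u = a\<^sup>* a\<^sup>n\<close>, hence \<open>a\<^sup>* = a\<^sup>* a x\<close>, which forces \<open>a x\<close> to be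
  self-adjoint with \<open>a x a = a\<close>; and \<open>u a = a\<^sup>n\<^sup>+\<^sup>1\<close> gives \<open>u\<^sup>-\<^sup>1 a\<^sup>n\<^sup>-\<^sup>1 a\<^sup>2 = a\<close>, from which
  the two remaining core inverse equations follow.
\<close>

lemma star_zero [simp]: "star 0 = (0::'a::star_ring)"
proof -
  have "star (0::'a) = star 0 + star 0"
    by (metis add_0 star_add)
  then show ?thesis by simp
qed

lemma star_one [simp]: "star 1 = (1::'a::star_ring)"
  by (metis mult_1_left mult_1_right star_mult star_star)

lemma star_diff: "star (x - y) = star x - star (y::'a::star_ring)"
  by (metis star_add diff_add_cancel eq_diff_eq)

lemma self_adjoint_inner_inverse_of_star_absorb:
  fixes a x :: "'a::star_ring"
  assumes absorb: "star a = star a * (a * x)"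
  shows "star (a * x) = a * x" and "a * x * a = a"
proof -
  have "star (a * x) = star x * (star a * (a * x))"
    using absorb by (simp add: star_mult)
  also have "\<dots> = star (a * x) * (a * x)"
    by (simp add: star_mult mult.assoc)
  finally have square: "star (a * x) = star (a * x) * (a * x)" .
  have "a * x = star (star (a * x) * (a * x))"
    using square by (metis star_star)
  also have "\<dots> = star (a * x)"
    using square by (metis star_mult star_star)
  finally show self_adjoint: "star (a * x) = a * x" ..
  have "a = star (star a * (a * x))"
    using absorb by (simp add: star_star)
  also have "\<dots> = a * x * a"
    using self_adjoint by (simp add: star_mult star_star)
  finally show "a * x * a = a" ..
qed

lemma inv_el_eqI:
  fixes u v :: "'a::ring_1"
  assumes "u * v = 1" and "v * u = 1"
  shows "inv_el u = v"
  unfolding inv_el_def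
proof (rule the_equality)
  fix w assume "u * w = 1 \<and> w * u = 1"
  then show "w = v"
    using assms by (metis mult.assoc mult_1_left mult_1_right)
qed (use assms in simp)

lemma power_Suc_mult_power_Suc:
  fixes a x :: "'a::monoid_mult"
  assumes "a * x * x = x"
  shows "a ^ Suc k * x ^ Suc k = a * x"
proof (induction k)
  case (Suc k)
  have "a ^ Suc (Suc k) * x ^ Suc (Suc k) = a ^ Suc k * (a * x * x) * x ^ k"
    by (simp only: power_Suc2[of a "Suc k"] power_Suc[of x] mult.assoc)
  also have "\<dots> = a ^ Suc k * x ^ Suc k"
    using assms by (simp only: power_Suc[of x] mult.assoc)
  finally show ?case
    using Suc by simp
qed simp

text \<open>The hypotheses are symmetric in \<open>a\<close> and \<open>x\<close>, so this also yields the left inverse.\<close>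

lemma power_plus_complement_right_inverse:
  fixes a x :: "'a::ring_1"
  assumes axx: "a * x * x = x" and xaa: "x * a * a = a"
  shows "(a ^ Suc k + (1 - a * x)) * (x ^ Suc k + (1 - x * a)) = 1"
proof -
  define A X where "A = a ^ Suc k" and "X = x ^ Suc k"
  have axa: "a * x * a = a"
    by (metis axx xaa mult.assoc)
  have "A * (x * a) = A"
    using axa by (metis A_def power_Suc2 mult.assoc)
  then have A_Q: "A * (1 - x * a) = 0"
    by (simp add: right_diff_distrib)
  have "a * x * X = X"
    using axx by (metis X_def power_Suc mult.assoc)
  then have P_X: "(1 - a * x) * X = 0"
    by (simp add: left_diff_distrib)
  have P_Q: "(1 - a * x) * (1 - x * a) = 1 - a * x"
    using axx by (simp add: algebra_simps flip: mult.assoc)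
  have "(A + (1 - a * x)) * (X + (1 - x * a))
      = A * X + A * (1 - x * a) + ((1 - a * x) * X + (1 - a * x) * (1 - x * a))"
    by (simp only: distrib_left distrib_right add_ac)
  also have "\<dots> = 1"
    using power_Suc_mult_power_Suc[OF axx, of k] A_Q P_X P_Q by (simp add: A_def X_def)
  finally show ?thesis
    by (simp add: A_def X_def)
qed

lemma is_core_inverse_iff:
  "is_core_inverse a x \<longleftrightarrow> star (a * x) = a * x \<and> a * x * x = x \<and> x * a * a = a"
  by (simp add: is_core_inverse_def power2_eq_square mult.assoc)

lemma is_core_inverse_unique:
  fixes a x z :: "'a::star_ring"
  assumes x: "is_core_inverse a x" and z: "is_core_inverse a z"
  shows "x = z"
proof -
  have hx: "star (a * x) = a * x" "a * x * x = x" "x * a * a = a"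
    using x by (simp_all add: is_core_inverse_iff)
  have hz: "star (a * z) = a * z" "a * z * z = z" "z * a * a = a"
    using z by (simp_all add: is_core_inverse_iff)
  have axa: "a * x * a = a" and aza: "a * z * a = a"
    by (metis hx(2,3) hz(2,3) mult.assoc)+
  have "a * z * (a * x) = a * x"
    using aza by (metis mult.assoc)
  then have "a * x = star (a * z * (a * x))"
    using hx(1) by simp
  also have "\<dots> = a * x * (a * z)"
    using hx(1) hz(1) by (simp add: star_mult)
  also have "\<dots> = a * z"
    using axa by (simp flip: mult.assoc)
  finally have ax_az: "a * x = a * z" .
  have "x = x * (a * x)"
    by (metis hx(2,3) mult.assoc)
  also have "\<dots> = x * a * (a * z * z)"
    using ax_az hz(2) by (metis mult.assoc)
  also have "\<dots> = z"
    using hx(3) hz(2) by (metis mult.assoc)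
  finally show ?thesis .
qed

lemma core_inv_eqI: "is_core_inverse a x \<Longrightarrow> core_inv a = x"
  unfolding core_inv_def using is_core_inverse_unique by blast

lemma core_inverse_complement_unit:
  fixes a x :: "'a::star_ring"
  assumes x: "is_core_inverse a x"
  shows "(1 - a * x) * a = 0"
    and "invertible_el (a ^ Suc k + star (1 - a * x) * (1 - a * x))"
proof -
  have herm: "star (a * x) = a * x" and axx: "a * x * x = x" and xaa: "x * a * a = a"
    using x by (simp_all add: is_core_inverse_iff)
  have axa: "a * x * a = a"
    by (metis axx xaa mult.assoc)
  then show "(1 - a * x) * a = 0"
    by (simp add: algebra_simps)
  have "star (1 - a * x) * (1 - a * x) = 1 - a * x"
    using herm axa by (simp add: star_diff algebra_simps flip: mult.assoc)
  then show "invertible_el (a ^ Suc k + star (1 - a * x) * (1 - a * x))"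
    unfolding invertible_el_def
    using power_plus_complement_right_inverse[OF axx xaa, of k]
          power_plus_complement_right_inverse[OF xaa axx, of k]
    by auto
qed

lemma is_core_inverse_from_unit:
  fixes a b y :: "'a::star_ring"
  assumes ba: "b * a = 0"
    and uy: "(a ^ Suc (Suc m) + star b * b) * y = 1"
    and yu: "y * (a ^ Suc (Suc m) + star b * b) = 1"
  shows "is_core_inverse a (a ^ Suc m * y)"
proof -
  define u where "u = a ^ Suc (Suc m) + star b * b"
  define x where "x = a ^ Suc m * y"
  define t where "t = y * a ^ Suc m"
  have "star a * star b = 0"
    using ba by (metis star_mult star_zero)
  then have "star a * u = star a * a ^ Suc (Suc m)"
    by (simp add: u_def distrib_left flip: mult.assoc)
  then have "star a = star a * (a * x)"
    using uy by (metis u_def x_def mult.assoc mult_1_right power_Suc)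
  then have herm: "star (a * x) = a * x" and axa: "a * x * a = a"
    by (rule self_adjoint_inner_inverse_of_star_absorb)+
  have "u * a = a ^ Suc (Suc m) * a"
    by (simp add: u_def distrib_right mult.assoc ba)
  then have taa: "t * (a * a) = a"
    using yu by (metis u_def t_def mult.assoc mult_1_left power_Suc2)
  have "t * a = t * (a * a) * (a ^ m * y * a)"
    using axa by (simp add: x_def mult.assoc)
  also have "\<dots> = x * a"
    using taa by (simp add: x_def mult.assoc)
  finally have ta_xa: "t * a = x * a" .
  have "x * a * a = a"
    using ta_xa taa by (metis mult.assoc)
  moreover have "a * x * x = x"
    using axa by (metis x_def mult.assoc power_Suc)
  ultimately show ?thesis
    unfolding x_def[symmetric] is_core_inverse_iff using herm by simp
qed

theorem corollary2p9:
  fixes a :: "'a::star_ring" and n :: nat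
  assumes "n \<ge> 2"
  shows "(core_invertible a \<longleftrightarrow>
            (\<exists>b \<in> left_annihilator a. invertible_el (a ^ n + star b * b)))
       \<and> (\<forall>b \<in> left_annihilator a. invertible_el (a ^ n + star b * b) \<longrightarrow>
            core_inv a = a ^ (n - 1) * inv_el (a ^ n + star b * b))"
proof -
  obtain m where n: "n = Suc (Suc m)"
    using assms by (metis add_2_eq_Suc le_Suc_ex)
  have core: "is_core_inverse a (a ^ (n - 1) * inv_el (a ^ n + star b * b))"
    if b: "b \<in> left_annihilator a" and unit: "invertible_el (a ^ n + star b * b)" for b
  proof -
    obtain y where uy: "(a ^ n + star b * b) * y = 1" and yu: "y * (a ^ n + star b * b) = 1"
      using unit unfolding invertible_el_def by blast
    have "is_core_inverse a (a ^ Suc m * y)"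
      using b uy yu by (intro is_core_inverse_from_unit) (simp_all add: n left_annihilator_def)
    moreover have "inv_el (a ^ n + star b * b) = y"
      using uy yu by (rule inv_el_eqI)
    ultimately show ?thesis
      by (simp add: n)
  qed
  have "\<exists>b \<in> left_annihilator a. invertible_el (a ^ n + star b * b)"
    if "is_core_inverse a x" for x
  proof
    show "1 - a * x \<in> left_annihilator a"
      using core_inverse_complement_unit(1)[OF that] by (simp add: left_annihilator_def)
    show "invertible_el (a ^ n + star (1 - a * x) * (1 - a * x))"
      using core_inverse_complement_unit(2)[OF that, of "Suc m"] by (simp only: n)
  qed
  then show ?thesis
    using core core_inv_eqI by (auto simp: core_invertible_def)
qed

end
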